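(* Let $t_1,x_1,t_2,x_2,b$ satisfy $0<t_1<t_2$, $\frac{x_1}{t_1}>\frac{x_2}{t_2}$, $0\le b\le\frac{(x_2-x_1)^2}{t_2-t_1}+\frac{x_1^2}{t_1}-\frac{x_2^2}{t_2}$. Let $(F,\rho)$ be a feasible pair minimizing $I_2$, with $F$ concave, $F'(t)\le\frac{F(t)}{t}$ on $[t_1,t_2]$, and $\rho$ nonincreasing, and let $g=g(F,\rho,b)$. If $g=0$ on an interval $[s_1,s_2]\subset[t_1,t_2]$, then $F'$ and $\rho$ are absolutely continuous on $[s_1,s_2]$.
   Context: A pair $(F,\rho)$ is feasible if $F:[t_1,t_2]\to\mathbb R$ is absolutely continuous with $F(t_1)=x_1$, $F(t_2)=x_2$, $\rho:[t_1,t_2]\to[0,\infty)$ is Lebesgue measurable, and $g(F,\rho,b)(t):=b-\frac{F(t_1)^2}{t_1}+\int_{t_1}^t(\rho(\tau)-F'(\tau)^2)d\tau+\frac{F(t)^2}{t}\ge0$ for all $t\in[t_1,t_2]$. $I_2(F,\rho)=\frac43\int_{t_1}^{t_2}\rho^{3/2}dt$. *)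

theory Defs
  imports "HOL-Analysis.Analysis"
begin

definition abs_cont_on :: "real set \<Rightarrow> (real \<Rightarrow> real) \<Rightarrow> bool" where
  "abs_cont_on S f \<longleftrightarrow>
     (\<forall>e>0. \<exists>d>0. \<forall>(n::nat) a b.
        (\<forall>i<n. a i \<le> b i \<and> a i \<in> S \<and> b i \<in> S) \<and>
        (\<forall>i<n. \<forall>j<n. i \<noteq> j \<longrightarrow> b i \<le> a j \<or> b j \<le> a i) \<and>
        (\<Sum>i<n. b i - a i) < d
        \<longrightarrow> (\<Sum>i<n. \<bar>f (b i) - f (a i)\<bar>) < e)"

definition gfun :: "real \<Rightarrow> (real \<Rightarrow> real) \<Rightarrow> (real \<Rightarrow> real) \<Rightarrow> real \<Rightarrow> real \<Rightarrow> real" where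
  "gfun t1 F \<rho> b t =
     b - (F t1)\<^sup>2 / t1 + (LINT \<tau>:{t1..t}|lebesgue. \<rho> \<tau> - (deriv F \<tau>)\<^sup>2) + (F t)\<^sup>2 / t"

definition feasible :: "real \<Rightarrow> real \<Rightarrow> real \<Rightarrow> real \<Rightarrow> real \<Rightarrow> (real \<Rightarrow> real) \<Rightarrow> (real \<Rightarrow> real) \<Rightarrow> bool" where
  "feasible t1 x1 t2 x2 b F \<rho> \<longleftrightarrow>
     abs_cont_on {t1..t2} F \<and> F t1 = x1 \<and> F t2 = x2 \<and>
     (\<forall>t\<in>{t1..t2}. 0 \<le> \<rho> t) \<and>
     \<rho> \<in> borel_measurable (lebesgue_on {t1..t2}) \<and>
     set_integrable lebesgue {t1..t2} (\<lambda>\<tau>. \<rho> \<tau> - (deriv F \<tau>)\<^sup>2) \<and>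
     (\<forall>t\<in>{t1..t2}. gfun t1 F \<rho> b t \<ge> 0)"

definition I2 :: "real \<Rightarrow> real \<Rightarrow> (real \<Rightarrow> real) \<Rightarrow> ennreal" where
  "I2 t1 t2 \<rho> = ennreal (4/3) * (\<integral>\<^sup>+ t\<in>{t1..t2}. ennreal (\<rho> t powr (3/2)) \<partial>lebesgue)"

end

(* On the set D of points of (s1, s2) where F is differentiable and rho is continuous, which
   misses only countably many points, differentiating g = 0 gives rho = (F t / t - F' t)^2, and
   F' <= F/t turns this into F t / t - F' t = sqrt (rho t).  As F' (by concavity) and sqrt rho are
   both nonincreasing, 0 <= F' a - F' c <= F a / a - F c / c for a <= c in D.  Thus F' on D is
   dominated by the absolutely continuous function F/t, and its McShane extension h is absolutely
   continuous; concavity and the density of D make h the derivative of F on all of [s1, s2].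
   Finally the monotone function rho agrees on the dense set D with the continuous function
   (F t / t - h t)^2, hence everywhere on (s1, s2). *)

theory Submission
  imports Defs
begin

definition nonoverlapping_intervals :: "real set \<Rightarrow> nat \<Rightarrow> (nat \<Rightarrow> real) \<Rightarrow> (nat \<Rightarrow> real) \<Rightarrow> bool"
  where "nonoverlapping_intervals S n a b \<longleftrightarrow>
    (\<forall>i<n. a i \<le> b i \<and> a i \<in> S \<and> b i \<in> S) \<and>
    (\<forall>i<n. \<forall>j<n. i \<noteq> j \<longrightarrow> b i \<le> a j \<or> b j \<le> a i)"

lemma abs_cont_on_iff:
  "abs_cont_on S f \<longleftrightarrow>
    (\<forall>e>0. \<exists>d>0. \<forall>n a b. nonoverlapping_intervals S n a b \<and> (\<Sum>i<n. b i - a i) < d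
       \<longrightarrow> (\<Sum>i<n. \<bar>f (b i) - f (a i)\<bar>) < e)"
  by (simp add: abs_cont_on_def nonoverlapping_intervals_def conj_assoc)

lemma abs_cont_onI:
  assumes "\<And>e. e > 0 \<Longrightarrow> \<exists>d>0. \<forall>n a b. nonoverlapping_intervals S n a b \<and> (\<Sum>i<n. b i - a i) < d
             \<longrightarrow> (\<Sum>i<n. \<bar>f (b i) - f (a i)\<bar>) < e"
  shows "abs_cont_on S f"
  using assms by (simp add: abs_cont_on_iff)

lemma abs_cont_onE:
  assumes "abs_cont_on S f" "e > 0"
  obtains d where "d > 0"
    "\<And>n a b. nonoverlapping_intervals S n a b \<Longrightarrow> (\<Sum>i<n. b i - a i) < d
       \<Longrightarrow> (\<Sum>i<n. \<bar>f (b i) - f (a i)\<bar>) < e"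
  using assms by (auto simp: abs_cont_on_iff)

lemma nonoverlapping_intervals_mono:
  "nonoverlapping_intervals S n a b \<Longrightarrow> S \<subseteq> T \<Longrightarrow> nonoverlapping_intervals T n a b"
  by (auto simp: nonoverlapping_intervals_def)

lemma abs_cont_on_subset: "abs_cont_on T f \<Longrightarrow> S \<subseteq> T \<Longrightarrow> abs_cont_on S f"
  unfolding abs_cont_on_iff by (meson nonoverlapping_intervals_mono)

lemma abs_cont_on_const: "abs_cont_on S (\<lambda>_. c)"
  by (rule abs_cont_onI) (auto intro: exI[of _ 1])

lemma abs_cont_on_ident: "abs_cont_on S (\<lambda>x. x)"
proof (rule abs_cont_onI)
  fix e :: real assume "e > 0"
  moreover have "(\<Sum>i<n. \<bar>b i - a i\<bar>) = (\<Sum>i<n. b i - a i)"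
    if "nonoverlapping_intervals S n a b" for n a b
    using that by (intro sum.cong) (auto simp: nonoverlapping_intervals_def)
  ultimately show "\<exists>d>0. \<forall>n a b. nonoverlapping_intervals S n a b \<and> (\<Sum>i<n. b i - a i) < d
      \<longrightarrow> (\<Sum>i<n. \<bar>b i - a i\<bar>) < e"
    by auto
qed

lemma abs_cont_on_imp_continuous_on:
  assumes "abs_cont_on S f" shows "continuous_on S f"
  unfolding continuous_on_iff
proof (intro ballI allI impI)
  fix x e assume x: "x \<in> S" and "(e::real) > 0"
  obtain d where "d > 0" and d: "\<And>n a b. nonoverlapping_intervals S n a b \<Longrightarrow>
      (\<Sum>i<n. b i - a i) < d \<Longrightarrow> (\<Sum>i<n. \<bar>f (b i) - f (a i)\<bar>) < e"
    using abs_cont_onE[OF assms \<open>e > 0\<close>] by blast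
  have "dist (f y) (f x) < e" if "y \<in> S" "dist y x < d" for y
  proof (cases "x \<le> y")
    case True
    then show ?thesis using d[of 1 "\<lambda>_. x" "\<lambda>_. y"] x that
      by (auto simp: nonoverlapping_intervals_def dist_real_def abs_minus_commute)
  next
    case False
    then show ?thesis using d[of 1 "\<lambda>_. y" "\<lambda>_. x"] x that
      by (simp add: nonoverlapping_intervals_def dist_real_def abs_minus_commute)
  qed
  with \<open>d > 0\<close> show "\<exists>d>0. \<forall>y\<in>S. dist y x < d \<longrightarrow> dist (f y) (f x) < e" by blast
qed

lemma abs_cont_on_dominated:
  assumes g: "abs_cont_on S g" and k: "abs_cont_on S k" and "A \<ge> 0" "B \<ge> 0"
    and le: "\<And>x y. x \<in> S \<Longrightarrow> y \<in> S \<Longrightarrow> \<bar>f x - f y\<bar> \<le> A * \<bar>g x - g y\<bar> + B * \<bar>k x - k y\<bar>"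
  shows "abs_cont_on S f"
proof (rule abs_cont_onI)
  fix e :: real assume "e > 0"
  define eg ek where "eg = e / (2 * (A + 1))" and "ek = e / (2 * (B + 1))"
  have "eg > 0" "ek > 0" "A * eg < e / 2" "B * ek < e / 2"
    using \<open>e > 0\<close> \<open>A \<ge> 0\<close> \<open>B \<ge> 0\<close> by (simp_all add: eg_def ek_def field_simps)
  obtain dg where "dg > 0" and dg: "\<And>n a b. nonoverlapping_intervals S n a b \<Longrightarrow>
      (\<Sum>i<n. b i - a i) < dg \<Longrightarrow> (\<Sum>i<n. \<bar>g (b i) - g (a i)\<bar>) < eg"
    using abs_cont_onE[OF g \<open>eg > 0\<close>] by blast
  obtain dk where "dk > 0" and dk: "\<And>n a b. nonoverlapping_intervals S n a b \<Longrightarrow>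
      (\<Sum>i<n. b i - a i) < dk \<Longrightarrow> (\<Sum>i<n. \<bar>k (b i) - k (a i)\<bar>) < ek"
    using abs_cont_onE[OF k \<open>ek > 0\<close>] by blast
  have "(\<Sum>i<n. \<bar>f (b i) - f (a i)\<bar>) < e"
    if ab: "nonoverlapping_intervals S n a b" and len: "(\<Sum>i<n. b i - a i) < min dg dk" for n a b
  proof -
    have "(\<Sum>i<n. \<bar>f (b i) - f (a i)\<bar>)
        \<le> (\<Sum>i<n. A * \<bar>g (b i) - g (a i)\<bar> + B * \<bar>k (b i) - k (a i)\<bar>)"
      using ab by (intro sum_mono le) (auto simp: nonoverlapping_intervals_def)
    also have "\<dots> = A * (\<Sum>i<n. \<bar>g (b i) - g (a i)\<bar>) + B * (\<Sum>i<n. \<bar>k (b i) - k (a i)\<bar>)"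
      by (simp add: sum.distrib sum_distrib_left)
    also have "\<dots> \<le> A * eg + B * ek"
      using dg[OF ab] dk[OF ab] len \<open>A \<ge> 0\<close> \<open>B \<ge> 0\<close>
      by (intro add_mono mult_left_mono) auto
    also have "\<dots> < e"
      using \<open>A * eg < e / 2\<close> \<open>B * ek < e / 2\<close> by linarith
    finally show ?thesis .
  qed
  with \<open>dg > 0\<close> \<open>dk > 0\<close> show "\<exists>d>0. \<forall>n a b. nonoverlapping_intervals S n a b \<and>
      (\<Sum>i<n. b i - a i) < d \<longrightarrow> (\<Sum>i<n. \<bar>f (b i) - f (a i)\<bar>) < e"
    by (intro exI[of _ "min dg dk"]) auto
qed

lemma abs_cont_on_diff:
  assumes "abs_cont_on S f" "abs_cont_on S g" shows "abs_cont_on S (\<lambda>x. f x - g x)"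
proof (rule abs_cont_on_dominated[OF assms, of 1 1])
  fix x y
  have "\<bar>(f x - f y) - (g x - g y)\<bar> \<le> \<bar>f x - f y\<bar> + \<bar>g x - g y\<bar>"
    by (rule abs_triangle_ineq4)
  then show "\<bar>f x - g x - (f y - g y)\<bar> \<le> 1 * \<bar>f x - f y\<bar> + 1 * \<bar>g x - g y\<bar>"
    by (simp add: algebra_simps)
qed simp_all

lemma abs_cont_on_mult:
  assumes "compact S" and f: "abs_cont_on S f" and g: "abs_cont_on S g"
  shows "abs_cont_on S (\<lambda>x. f x * g x)"
proof -
  obtain Kf Kg where "Kf > 0" "Kg > 0" and Kf: "\<And>x. x \<in> S \<Longrightarrow> \<bar>f x\<bar> \<le> Kf"
    and Kg: "\<And>x. x \<in> S \<Longrightarrow> \<bar>g x\<bar> \<le> Kg"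
    using abs_cont_on_imp_continuous_on[OF f] abs_cont_on_imp_continuous_on[OF g] \<open>compact S\<close>
    by (metis bounded_pos compact_continuous_image compact_imp_bounded imageI real_norm_def)
  show ?thesis
  proof (rule abs_cont_on_dominated[OF g f, of Kf Kg])
    fix x y assume "x \<in> S" "y \<in> S"
    have "\<bar>f x * g x - f y * g y\<bar> = \<bar>f x * (g x - g y) + g y * (f x - f y)\<bar>"
      by (simp add: algebra_simps)
    also have "\<dots> \<le> \<bar>f x\<bar> * \<bar>g x - g y\<bar> + \<bar>g y\<bar> * \<bar>f x - f y\<bar>"
      by (metis abs_mult abs_triangle_ineq)
    also have "\<dots> \<le> Kf * \<bar>g x - g y\<bar> + Kg * \<bar>f x - f y\<bar>"
      using Kf[OF \<open>x \<in> S\<close>] Kg[OF \<open>y \<in> S\<close>] by (intro add_mono mult_right_mono) auto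
    finally show "\<bar>f x * g x - f y * g y\<bar> \<le> Kf * \<bar>g x - g y\<bar> + Kg * \<bar>f x - f y\<bar>" .
  qed (use \<open>Kf > 0\<close> \<open>Kg > 0\<close> in auto)
qed

lemma abs_cont_on_inverse:
  assumes "c > 0" "S \<subseteq> {c..}" shows "abs_cont_on S inverse"
proof (rule abs_cont_on_dominated[OF abs_cont_on_ident abs_cont_on_ident, of "1 / c\<^sup>2" 0])
  fix x y assume "x \<in> S" "y \<in> S"
  then have "c \<le> x" "c \<le> y" using assms by auto
  then have "c\<^sup>2 \<le> x * y" using \<open>c > 0\<close> by (metis mult_mono' less_imp_le power2_eq_square)
  then have "\<bar>x - y\<bar> / (x * y) \<le> \<bar>x - y\<bar> / c\<^sup>2"
    using \<open>c > 0\<close> \<open>c \<le> x\<close> \<open>c \<le> y\<close> by (intro divide_left_mono) auto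
  moreover have "\<bar>inverse x - inverse y\<bar> = \<bar>x - y\<bar> / (x * y)"
    using \<open>c \<le> x\<close> \<open>c \<le> y\<close> \<open>c > 0\<close> by (simp add: field_simps abs_minus_commute)
  ultimately show "\<bar>inverse x - inverse y\<bar> \<le> 1 / c\<^sup>2 * \<bar>x - y\<bar> + 0 * \<bar>x - y\<bar>" by simp
qed simp_all

lemma abs_cont_on_divide_ident:
  assumes "abs_cont_on {a..b} f" "0 < a"
  shows "abs_cont_on {a..b} (\<lambda>x. f x / x)"
  using abs_cont_on_mult[OF compact_Icc assms(1) abs_cont_on_inverse[OF \<open>0 < a\<close>, of "{a..b}"]]
  by (simp add: divide_inverse)

lemma concave_on_subset: "concave_on T f \<Longrightarrow> S \<subseteq> T \<Longrightarrow> convex S \<Longrightarrow> concave_on S f"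
  unfolding concave_on_def by (rule convex_on_subset)

lemma countable_discontinuities_antimono_on:
  fixes f :: "real \<Rightarrow> real"
  assumes "open A" "antimono_on A f"
  shows "countable {x \<in> A. \<not> isCont f x}"
proof -
  have "mono_on A (\<lambda>x. - f x)"
    using assms(2) by (auto simp: monotone_on_def)
  then have "countable {x \<in> A. \<not> isCont (\<lambda>x. - f x) x}"
    by (rule mono_on_ctble_discont_open[OF \<open>open A\<close>])
  moreover have "isCont f x" if "isCont (\<lambda>x. - f x) x" for x
    using isCont_minus[OF that] by simp
  then have "{x \<in> A. \<not> isCont f x} \<subseteq> {x \<in> A. \<not> isCont (\<lambda>x. - f x) x}" by blast
  ultimately show ?thesis by (rule countable_subset[rotated])
qed

lemma concave_on_imp_below_tangent:
  fixes f :: "real \<Rightarrow> real"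
  assumes "concave_on A f" "connected A" "c \<in> interior A" "x \<in> A"
    and "(f has_real_derivative f') (at c within A)"
  shows "f x - f c \<le> f' * (x - c)"
  using convex_on_imp_above_tangent[of A "\<lambda>x. - f x" c x "- f'"] assms
  by (simp add: concave_on_def DERIV_minus)

lemma concave_on_deriv_antimono:
  fixes f :: "real \<Rightarrow> real"
  assumes "concave_on {a<..<b} f" "x \<in> {a<..<b}" "y \<in> {a<..<b}" "x \<le> y"
    and "(f has_real_derivative Dx) (at x)" "(f has_real_derivative Dy) (at y)"
  shows "Dy \<le> Dx"
proof -
  have "f y - f x \<le> Dx * (y - x)" "f x - f y \<le> Dy * (x - y)"
    using assms by (auto intro!: concave_on_imp_below_tangent has_field_derivative_at_within)
  then have "Dy * (y - x) \<le> Dx * (y - x)" by (simp add: algebra_simps)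
  show ?thesis
  proof (cases "x = y")
    case True
    then show ?thesis using DERIV_unique[OF assms(5)[unfolded True] assms(6)] by simp
  next
    case False
    with \<open>x \<le> y\<close> have "0 < y - x" by simp
    with \<open>Dy * (y - x) \<le> Dx * (y - x)\<close> show ?thesis by (simp add: mult_le_cancel_right_pos)
  qed
qed

lemma concave_on_slope_le:
  fixes f :: "real \<Rightarrow> real"
  assumes "concave_on {a<..<b} f" "a < x" "x < t" "t < y" "y < b"
  shows "(f y - f x) / (y - x) \<le> (f t - f x) / (t - x)"
    and "(f y - f t) / (y - t) \<le> (f y - f x) / (y - x)"
proof -
  have "convex_on {a<..<b} (\<lambda>x. - f x)" using assms(1) by (simp add: concave_on_def)
  from convex_on_slope_le[OF this, of x y t] assms
  have "(f t - f x) / (x - t) \<le> (f y - f x) / (x - y)" "(f y - f x) / (x - y) \<le> (f y - f t) / (t - y)"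
    by (simp_all add: minus_divide_left[symmetric])
  moreover have neg: "u / (v - w) = - (u / (w - v))" for u v w :: real
    by (metis minus_diff_eq divide_minus_right)
  ultimately show "(f y - f x) / (y - x) \<le> (f t - f x) / (t - x)"
    and "(f y - f t) / (y - t) \<le> (f y - f x) / (y - x)"
    using neg[of "f t - f x" x t] neg[of "f y - f x" x y] neg[of "f y - f t" t y] by linarith+
qed

(* For concave f this is the right derivative. Being antitone it has only countably many
   discontinuities, and f is differentiable at every point of continuity. *)
definition sup_right_slope :: "real \<Rightarrow> (real \<Rightarrow> real) \<Rightarrow> real \<Rightarrow> real" where
  "sup_right_slope b f s = Sup ((\<lambda>y. (f y - f s) / (y - s)) ` {s<..<b})"

lemma
  fixes f :: "real \<Rightarrow> real"
  assumes "concave_on {a<..<b} f" "a < s" "s < b"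
  shows slope_le_sup_right_slope: "\<And>y. s < y \<Longrightarrow> y < b \<Longrightarrow> (f y - f s) / (y - s) \<le> sup_right_slope b f s"
    and sup_right_slope_le_slope: "\<And>w. a < w \<Longrightarrow> w < s \<Longrightarrow> sup_right_slope b f s \<le> (f s - f w) / (s - w)"
    and sup_right_slope_less_iff: "\<And>l. l < sup_right_slope b f s \<longleftrightarrow> (\<exists>y\<in>{s<..<b}. l < (f y - f s) / (y - s))"
proof -
  let ?S = "(\<lambda>y. (f y - f s) / (y - s)) ` {s<..<b}"
  have bounded: "z \<le> (f s - f w) / (s - w)" if "z \<in> ?S" "a < w" "w < s" for z w
  proof -
    from \<open>z \<in> ?S\<close> obtain y where "s < y" "y < b" "z = (f y - f s) / (y - s)" by auto
    with concave_on_slope_le[OF assms(1) \<open>a < w\<close> \<open>w < s\<close>] show ?thesis by force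
  qed
  have "bdd_above ?S"
    using bounded[of _ "(a + s) / 2"] \<open>a < s\<close>
    by (intro bdd_aboveI[where M = "(f s - f ((a + s) / 2)) / (s - (a + s) / 2)"]) auto
  moreover have "?S \<noteq> {}" using \<open>s < b\<close> by auto
  ultimately show "\<And>y. s < y \<Longrightarrow> y < b \<Longrightarrow> (f y - f s) / (y - s) \<le> sup_right_slope b f s"
    and "\<And>w. a < w \<Longrightarrow> w < s \<Longrightarrow> sup_right_slope b f s \<le> (f s - f w) / (s - w)"
    and "\<And>l. l < sup_right_slope b f s \<longleftrightarrow> (\<exists>y\<in>{s<..<b}. l < (f y - f s) / (y - s))"
    unfolding sup_right_slope_def using bounded
    by (auto intro: cSup_upper cSup_least simp: less_cSup_iff)
qed

lemma sup_right_slope_antimono: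
  fixes f :: "real \<Rightarrow> real"
  assumes "concave_on {a<..<b} f"
  shows "antimono_on {a<..<b} (sup_right_slope b f)"
proof (rule monotone_onI)
  fix s t assume "s \<in> {a<..<b}" "t \<in> {a<..<b}" "s \<le> t"
  show "sup_right_slope b f t \<le> sup_right_slope b f s"
  proof (cases "s = t")
    case False
    with \<open>s \<le> t\<close> have "s < t" by simp
    with assms \<open>s \<in> {a<..<b}\<close> \<open>t \<in> {a<..<b}\<close>
    have "sup_right_slope b f t \<le> (f t - f s) / (t - s)" "(f t - f s) / (t - s) \<le> sup_right_slope b f s"
      by (auto intro: sup_right_slope_le_slope slope_le_sup_right_slope)
    then show ?thesis by linarith
  qed simp
qed

lemma concave_on_has_real_derivative_sup_right_slope:
  fixes f :: "real \<Rightarrow> real"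
  assumes conc: "concave_on {a<..<b} f" and s: "a < s" "s < b"
    and cont: "isCont (sup_right_slope b f) s"
  shows "(f has_real_derivative sup_right_slope b f s) (at s)"
proof -
  let ?B = "sup_right_slope b f"
  have "((\<lambda>y. (f y - f s) / (y - s)) \<longlongrightarrow> ?B s) (at s)"
    unfolding tendsto_iff
  proof (intro allI impI)
    fix e :: real assume "e > 0"
    then obtain z where z: "s < z" "z < b" "?B s - e < (f z - f s) / (z - s)"
      using sup_right_slope_less_iff[OF conc s, of "?B s - e"] by auto
    from cont \<open>e > 0\<close> obtain \<delta> where "\<delta> > 0" and \<delta>: "\<And>w. \<bar>w - s\<bar> < \<delta> \<Longrightarrow> \<bar>?B w - ?B s\<bar> < e"
      unfolding continuous_at_eps_delta dist_real_def by blast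
    have "\<bar>(f y - f s) / (y - s) - ?B s\<bar> < e" if y: "y \<noteq> s" "\<bar>y - s\<bar> < min \<delta> (min (z - s) (s - a))" for y
    proof (cases "s < y")
      case True
      then have "(f z - f s) / (z - s) \<le> (f y - f s) / (y - s)" "(f y - f s) / (y - s) \<le> ?B s"
        using y z s concave_on_slope_le(1)[OF conc, of s y z] slope_le_sup_right_slope[OF conc s, of y]
        by auto
      with z show ?thesis by linarith
    next
      case False
      then have "a < y" "y < s" using y by auto
      then have "?B s \<le> (f s - f y) / (s - y)" "(f s - f y) / (s - y) \<le> ?B y"
        using s sup_right_slope_le_slope[OF conc s] slope_le_sup_right_slope[OF conc, of y s]
        by auto
      moreover have "\<bar>?B y - ?B s\<bar> < e" using \<delta> y by simp
      moreover have "(f s - f y) / (s - y) = (f y - f s) / (y - s)"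
        by (metis minus_diff_eq minus_divide_divide)
      ultimately show ?thesis by (simp add: abs_less_iff)
    qed
    with \<open>\<delta> > 0\<close> z s show "\<forall>\<^sub>F y in at s. dist ((f y - f s) / (y - s)) (?B s) < e"
      unfolding eventually_at dist_real_def by (intro exI[of _ "min \<delta> (min (z - s) (s - a))"]) auto
  qed
  then show ?thesis by (simp add: has_field_derivative_iff)
qed

lemma concave_on_countable_nondifferentiable:
  fixes f :: "real \<Rightarrow> real"
  assumes "concave_on {a<..<b} f"
  shows "countable {s \<in> {a<..<b}. \<not> f differentiable (at s)}"
proof -
  have "countable {s \<in> {a<..<b}. \<not> isCont (sup_right_slope b f) s}"
    by (intro countable_discontinuities_antimono_on sup_right_slope_antimono assms) simp
  moreover have "f differentiable (at s)" if "s \<in> {a<..<b}" "isCont (sup_right_slope b f) s" for s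
    using concave_on_has_real_derivative_sup_right_slope[OF assms] that
    by (auto simp: real_differentiable_def)
  ultimately show ?thesis
    by (elim countable_subset[rotated]) blast
qed

lemma countable_nondifferentiable_or_discontinuous:
  fixes f \<rho> :: "real \<Rightarrow> real"
  assumes "concave_on {a..b} f" "antimono_on {a<..<b} \<rho>"
  shows "countable ({a<..<b} - {\<tau> \<in> {a<..<b}. f differentiable (at \<tau>) \<and> isCont \<rho> \<tau>})"
proof -
  have "concave_on {a<..<b} f"
    using assms(1) by (rule concave_on_subset) auto
  then have "countable ({s \<in> {a<..<b}. \<not> f differentiable (at s)} \<union> {s \<in> {a<..<b}. \<not> isCont \<rho> s})"
    using concave_on_countable_nondifferentiable countable_discontinuities_antimono_on[OF _ assms(2)]
    by simp
  then show ?thesis by (rule countable_subset[rotated]) blast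
qed

lemma countable_imp_negligible:
  fixes S :: "real set"
  shows "countable S \<Longrightarrow> negligible S"
  by (simp add: negligible_iff_null_sets countable_imp_null_set_lborel null_sets_completionI)

lemma integral_has_real_derivative_off_negligible:
  fixes f :: "real \<Rightarrow> real"
  assumes f: "f integrable_on {a..b}" and "negligible N" and x: "x \<in> {a..b}"
    and lim: "(f \<longlongrightarrow> l) (at x within {a..b} - N)"
  shows "((\<lambda>t. integral {a..t} f) has_real_derivative l) (at x within {a..b})"
proof -
  define g where "g t = (if t \<in> insert x N then l else f t)" for t
  have N: "negligible (insert x N)" using \<open>negligible N\<close> by simp
  have g_int: "g integrable_on {a..b}"
    by (rule integrable_spike[OF f N]) (simp add: g_def)
  have integral_eq: "integral {a..t} g = integral {a..t} f" for t
    by (rule integral_spike[OF N]) (simp add: g_def)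
  have "(g \<longlongrightarrow> l) (at x within {a..b} - N)"
    by (rule Lim_transform_eventually[OF lim]) (simp add: eventually_at_filter g_def)
  moreover have "(g \<longlongrightarrow> l) (at x within N)"
    by (rule Lim_transform_eventually[OF tendsto_const]) (simp add: eventually_at_filter g_def)
  ultimately have "(g \<longlongrightarrow> l) (at x within ({a..b} - N) \<union> N)"
    unfolding Lim_within_Un by blast
  then have "(g \<longlongrightarrow> l) (at x within {a..b})"
    by (rule tendsto_within_subset) blast
  then have "continuous (at x within {a..b}) g"
    by (simp add: continuous_within g_def)
  with integral_has_vector_derivative_continuous_at[OF g_int, of x "{}"] x
  have "((\<lambda>t. integral {a..t} g) has_real_derivative g x) (at x within {a..b})"
    by (simp add: has_real_derivative_iff_has_vector_derivative)
  then show ?thesis by (simp add: integral_eq g_def)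
qed

lemma concave_on_deriv_tendsto:
  fixes f :: "real \<Rightarrow> real"
  assumes conc: "concave_on {a<..<b} f" and \<tau>: "\<tau> \<in> {a<..<b}" and "f differentiable (at \<tau>)"
  shows "(deriv f \<longlongrightarrow> deriv f \<tau>) (at \<tau> within {s \<in> {a<..<b}. f differentiable (at s)})"
  unfolding tendsto_iff
proof (intro allI impI)
  fix e :: real assume "e > 0"
  let ?D = "deriv f \<tau>"
  have D: "(f has_real_derivative ?D) (at \<tau>)"
    using \<open>f differentiable (at \<tau>)\<close> DERIV_deriv_iff_real_differentiable by blast
  then obtain d0 where "d0 > 0"
    and d0: "\<And>y. \<bar>y - \<tau>\<bar> < d0 \<Longrightarrow> \<bar>f y - f \<tau> - ?D * (y - \<tau>)\<bar> \<le> e / 6 * \<bar>y - \<tau>\<bar>"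
    using \<open>e > 0\<close> unfolding has_field_derivative_def has_derivative_at_alt
    by (metis real_norm_def divide_pos_pos zero_less_numeral)
  define d where "d = min (d0 / 2) (min ((b - \<tau>) / 2) ((\<tau> - a) / 2))"
  have "\<bar>deriv f s - ?D\<bar> < e"
    if s: "s \<in> {a<..<b}" "f differentiable (at s)" "s \<noteq> \<tau>" "\<bar>s - \<tau>\<bar> < d" for s
  proof -
    define h where "h = s - \<tau>"
    have Ds: "(f has_real_derivative deriv f s) (at s)"
      using s(2) DERIV_deriv_iff_real_differentiable by blast
    have "\<tau> + 2 * h \<in> {a<..<b}" "\<bar>h\<bar> < d0" "\<bar>2 * h\<bar> < d0" "h \<noteq> 0"
      using s \<tau> by (auto simp: d_def h_def abs_if split: if_split_asm)
    have s_eq: "s = \<tau> + h" by (simp add: h_def)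
    \<comment> \<open>compare the tangents at \<open>s\<close> and \<open>\<tau>\<close> with the first-order expansion of \<open>f\<close> at \<open>\<tau>\<close>, taken at \<open>\<tau> + h\<close> and \<open>\<tau> + 2 h\<close>\<close>
    have "f (\<tau> + 2 * h) - f s \<le> deriv f s * (\<tau> + 2 * h - s)" "f \<tau> - f s \<le> deriv f s * (\<tau> - s)"
      "f s - f \<tau> \<le> ?D * (s - \<tau>)"
      using s \<tau> \<open>\<tau> + 2 * h \<in> {a<..<b}\<close> conc Ds D
      by (auto intro!: concave_on_imp_below_tangent has_field_derivative_at_within)
    then have T: "f (\<tau> + 2 * h) - f (\<tau> + h) \<le> deriv f s * h" "f \<tau> - f (\<tau> + h) \<le> - (deriv f s * h)"
      "f (\<tau> + h) - f \<tau> \<le> ?D * h"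
      by (simp_all add: s_eq)
    have "\<bar>f (\<tau> + h) - f \<tau> - ?D * h\<bar> \<le> e / 6 * \<bar>h\<bar>"
      "\<bar>f (\<tau> + 2 * h) - f \<tau> - ?D * (2 * h)\<bar> \<le> e / 6 * \<bar>2 * h\<bar>"
      using d0[of "\<tau> + h"] d0[of "\<tau> + 2 * h"] \<open>\<bar>h\<bar> < d0\<close> \<open>\<bar>2 * h\<bar> < d0\<close> by simp_all
    moreover have "?D * (2 * h) = 2 * (?D * h)" "e / 6 * \<bar>2 * h\<bar> = 2 * (e / 6 * \<bar>h\<bar>)"
      by (simp_all add: abs_mult)
    ultimately have "- (e / 2 * \<bar>h\<bar>) \<le> deriv f s * h - ?D * h" "deriv f s * h - ?D * h \<le> 0"
      using T unfolding abs_le_iff by linarith+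
    then have "\<bar>deriv f s - ?D\<bar> * \<bar>h\<bar> \<le> e / 2 * \<bar>h\<bar>"
      unfolding abs_mult[symmetric] left_diff_distrib by linarith
    with \<open>h \<noteq> 0\<close> \<open>e > 0\<close> show ?thesis
      by (simp add: mult_le_cancel_right_pos)
  qed
  moreover have "d > 0" using \<open>d0 > 0\<close> \<tau> by (simp add: d_def)
  ultimately show "\<forall>\<^sub>F s in at \<tau> within {s \<in> {a<..<b}. f differentiable (at s)}. dist (deriv f s) ?D < e"
    unfolding eventually_at dist_real_def by blast
qed

lemma mcshane_extension:
  fixes u q :: "'a \<Rightarrow> real"
  assumes "D \<noteq> {}" and dom: "\<And>a b. a \<in> D \<Longrightarrow> b \<in> D \<Longrightarrow> \<bar>u a - u b\<bar> \<le> \<bar>q a - q b\<bar>"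
  obtains h where "\<And>a. a \<in> D \<Longrightarrow> h a = u a" and "\<And>x y. \<bar>h x - h y\<bar> \<le> \<bar>q x - q y\<bar>"
proof
  define h where "h x = Inf ((\<lambda>a. u a + \<bar>q a - q x\<bar>) ` D)" for x
  from \<open>D \<noteq> {}\<close> obtain a0 where "a0 \<in> D" by blast
  have bdd: "bdd_below ((\<lambda>a. u a + \<bar>q a - q x\<bar>) ` D)" for x
  proof (rule bdd_belowI2)
    fix a assume "a \<in> D"
    with dom[OF \<open>a0 \<in> D\<close>] show "u a0 - \<bar>q a0 - q x\<bar> \<le> u a + \<bar>q a - q x\<bar>"
      by (smt (verit, best))
  qed
  have h_le: "h x \<le> u a + \<bar>q a - q x\<bar>" if "a \<in> D" for a x
    unfolding h_def using bdd that by (intro cInf_lower) auto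
  have le_h: "z \<le> h x" if "\<And>a. a \<in> D \<Longrightarrow> z \<le> u a + \<bar>q a - q x\<bar>" for z x
    unfolding h_def using \<open>D \<noteq> {}\<close> that by (intro cInf_greatest) auto
  show "h a = u a" if "a \<in> D" for a
  proof (rule antisym)
    show "h a \<le> u a" using h_le[OF that, of a] by simp
    show "u a \<le> h a"
      using dom[OF that] by (intro le_h) (smt (verit, best))
  qed
  have "h x - \<bar>q x - q y\<bar> \<le> h y" for x y
    using h_le[of _ x] by (intro le_h) (smt (verit, best))
  then show "\<bar>h x - h y\<bar> \<le> \<bar>q x - q y\<bar>" for x y
    by (smt (verit, best))
qed

lemma closure_eq_Icc_if_cocountable:
  fixes D :: "real set"
  assumes "D \<subseteq> {a<..<b}" "countable ({a<..<b} - D)" "a < b"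
  shows "closure D = {a..b}"
proof
  show "closure D \<subseteq> {a..b}"
    using closure_mono[OF assms(1)] \<open>a < b\<close> by simp
  have "{a<..<b} \<subseteq> closure D"
  proof
    fix x assume x: "x \<in> {a<..<b}"
    show "x \<in> closure D"
      unfolding closure_approachable
    proof (intro allI impI)
      fix e :: real assume "e > 0"
      then have "x \<in> ball x e \<inter> {a<..<b}" using x by simp
      then have "ball x e \<inter> {a<..<b} \<noteq> {}" by blast
      then obtain y where y: "y \<in> ball x e \<inter> {a<..<b}" "y \<notin> {a<..<b} - D"
        using open_minus_countable[OF assms(2)] by (meson open_Int open_ball open_greaterThanLessThan)
      then have "y \<in> D" "dist y x < e" by (auto simp: dist_commute)
      then show "\<exists>y\<in>D. dist y x < e" by blast
    qed
  qed
  then have "closure {a<..<b} \<subseteq> closure D"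
    using closure_minimal by blast
  then show "{a..b} \<subseteq> closure D" using \<open>a < b\<close> by simp
qed

lemma antimono_eq_continuous_if_eq_on_cocountable:
  fixes f g :: "real \<Rightarrow> real"
  assumes f: "antimono_on {a<..<b} f" and g: "continuous_on {a..b} g"
    and D: "D \<subseteq> {a<..<b}" "countable ({a<..<b} - D)" and eq: "\<And>x. x \<in> D \<Longrightarrow> f x = g x"
    and x: "x \<in> {a<..<b}"
  shows "f x = g x"
proof (rule antisym)
  let ?L = "D \<inter> {a<..<x}" and ?R = "D \<inter> {x<..<b}"
  have "countable ({a<..<x} - ?L)" "countable ({x<..<b} - ?R)"
    using x by (auto intro: countable_subset[OF _ D(2)])
  then have cl: "closure ?L = {a..x}" "closure ?R = {x..b}"
    using x by (simp_all add: closure_eq_Icc_if_cocountable)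
  have "continuous_on (closure ?L) (\<lambda>y. g y - f x)" "continuous_on (closure ?R) (\<lambda>y. f x - g y)"
    unfolding cl using x by (auto intro!: continuous_intros continuous_on_subset[OF g])
  moreover have "f x \<le> g y" if "y \<in> ?L" for y
    using that x eq[of y] D(1) monotone_onD[OF f, of y x] by auto
  moreover have "g y \<le> f x" if "y \<in> ?R" for y
    using that x eq[of y] D(1) monotone_onD[OF f, of x y] by auto
  ultimately show "f x \<le> g x" "g x \<le> f x"
    using continuous_ge_on_closure[of ?L "\<lambda>y. g y - f x" x 0]
      continuous_ge_on_closure[of ?R "\<lambda>y. f x - g y" x 0] x cl by auto
qed

lemma supergradient_ineq_closure:
  fixes f h :: "real \<Rightarrow> real"
  assumes "continuous_on (closure D) f" "continuous_on (closure D) h"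
    and "\<And>c x. c \<in> D \<Longrightarrow> x \<in> closure D \<Longrightarrow> f x - f c \<le> h c * (x - c)"
    and "c \<in> closure D" "x \<in> closure D"
  shows "f x - f c \<le> h c * (x - c)"
proof -
  have "continuous_on (closure D) (\<lambda>c. h c * (x - c) - (f x - f c))"
    using assms(1,2) by (intro continuous_intros)
  with continuous_ge_on_closure[of D "\<lambda>c. h c * (x - c) - (f x - f c)" c 0] assms(3-5)
  show ?thesis by simp
qed

lemma has_real_derivative_of_continuous_supergradient:
  fixes f h :: "real \<Rightarrow> real"
  assumes h: "continuous_on S h" and sup: "\<And>c x. c \<in> S \<Longrightarrow> x \<in> S \<Longrightarrow> f x - f c \<le> h c * (x - c)"
    and x: "x \<in> S"
  shows "(f has_real_derivative h x) (at x within S)"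
proof -
  have bound: "\<bar>(f y - f x) / (y - x) - h x\<bar> \<le> \<bar>h y - h x\<bar>" if "y \<in> S" "y \<noteq> x" for y
  proof -
    define q where "q = (f y - f x) / (y - x)"
    have "q * (y - x) = f y - f x" using \<open>y \<noteq> x\<close> by (simp add: q_def)
    with sup[OF x \<open>y \<in> S\<close>] sup[OF \<open>y \<in> S\<close> x]
    have "(q - h x) * (y - x) \<le> 0" "(h y - q) * (y - x) \<le> 0"
      by (simp_all add: algebra_simps)
    with \<open>y \<noteq> x\<close> have "h y \<le> q \<and> q \<le> h x \<or> h x \<le> q \<and> q \<le> h y"
      by (cases "x < y") (auto simp: mult_le_0_iff)
    then show ?thesis unfolding q_def[symmetric] by linarith
  qed
  have "((\<lambda>y. (f y - f x) / (y - x)) \<longlongrightarrow> h x) (at x within S)"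
    unfolding tendsto_iff
  proof (intro allI impI)
    fix e :: real assume "e > 0"
    with h x obtain d where "d > 0" and d: "\<And>y. y \<in> S \<Longrightarrow> dist y x < d \<Longrightarrow> dist (h y) (h x) < e"
      unfolding continuous_on_iff by blast
    have "dist ((f y - f x) / (y - x)) (h x) < e" if "y \<in> S" "y \<noteq> x" "dist y x < d" for y
      using bound[OF that(1,2)] d[OF that(1,3)] by (simp add: dist_real_def)
    with \<open>d > 0\<close> show "\<forall>\<^sub>F y in at x within S. dist ((f y - f x) / (y - x)) (h x) < e"
      unfolding eventually_at by blast
  qed
  then show ?thesis by (simp add: has_field_derivative_iff)
qed

lemma concave_on_abs_cont_derivative_if_dominated:
  fixes f q :: "real \<Rightarrow> real"
  assumes conc: "concave_on {a..b} f" and "a < b" and f: "continuous_on {a..b} f"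
    and D: "D \<subseteq> {a<..<b}" "countable ({a<..<b} - D)" "\<And>x. x \<in> D \<Longrightarrow> f differentiable (at x)"
    and q: "abs_cont_on {a..b} q"
    and dom: "\<And>x y. x \<in> D \<Longrightarrow> y \<in> D \<Longrightarrow> \<bar>deriv f x - deriv f y\<bar> \<le> \<bar>q x - q y\<bar>"
  obtains h where "abs_cont_on {a..b} h" "\<And>x. x \<in> D \<Longrightarrow> h x = deriv f x"
    "\<And>x. x \<in> {a..b} \<Longrightarrow> (f has_real_derivative h x) (at x within {a..b})"
proof -
  have clD: "closure D = {a..b}"
    using closure_eq_Icc_if_cocountable[OF D(1,2) \<open>a < b\<close>] .
  then have "D \<noteq> {}" using \<open>a < b\<close> by auto
  then obtain h where hD: "\<And>x. x \<in> D \<Longrightarrow> h x = deriv f x"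
    and hq: "\<And>x y. \<bar>h x - h y\<bar> \<le> \<bar>q x - q y\<bar>"
    using mcshane_extension[of D "deriv f" q] dom by metis
  have h_ac: "abs_cont_on {a..b} h"
    by (rule abs_cont_on_dominated[OF q q, of 1 0]) (simp_all add: hq)
  have "f x - f c \<le> h c * (x - c)" if "c \<in> D" "x \<in> {a..b}" for c x
    using that D conc hD[OF \<open>c \<in> D\<close>]
    by (intro concave_on_imp_below_tangent)
      (auto simp: DERIV_deriv_iff_real_differentiable[symmetric] intro: has_field_derivative_at_within)
  then have "f x - f c \<le> h c * (x - c)" if "c \<in> {a..b}" "x \<in> {a..b}" for c x
    using supergradient_ineq_closure[of D f h] f abs_cont_on_imp_continuous_on[OF h_ac] that
    unfolding clD by blast
  then have "(f has_real_derivative h x) (at x within {a..b})" if "x \<in> {a..b}" for x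
    using has_real_derivative_of_continuous_supergradient abs_cont_on_imp_continuous_on[OF h_ac] that
    by blast
  with h_ac hD that show ?thesis by blast
qed

lemma gfun_eq_integral:
  fixes F \<rho> :: "real \<Rightarrow> real"
  assumes "set_integrable lebesgue {t1..t2} (\<lambda>\<tau>. \<rho> \<tau> - (deriv F \<tau>)\<^sup>2)" "t \<in> {t1..t2}"
  shows "gfun t1 F \<rho> b t = b - (F t1)\<^sup>2 / t1 + integral {t1..t} (\<lambda>\<tau>. \<rho> \<tau> - (deriv F \<tau>)\<^sup>2) + (F t)\<^sup>2 / t"
proof -
  have "set_integrable lebesgue {t1..t} (\<lambda>\<tau>. \<rho> \<tau> - (deriv F \<tau>)\<^sup>2)"
    by (rule set_integrable_subset[OF assms(1)]) (use assms(2) in auto)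
  then show ?thesis
    by (simp add: gfun_def set_lebesgue_integral_eq_integral(2))
qed

lemma integral_diff_deriv_square_has_real_derivative:
  fixes F \<rho> :: "real \<Rightarrow> real"
  assumes conc: "concave_on {a..b} F"
    and int: "(\<lambda>t. \<rho> t - (deriv F t)\<^sup>2) integrable_on {a..b}"
    and \<tau>: "\<tau> \<in> {a<..<b}" and "F differentiable (at \<tau>)" "isCont \<rho> \<tau>"
  shows "((\<lambda>t. integral {a..t} (\<lambda>s. \<rho> s - (deriv F s)\<^sup>2)) has_real_derivative \<rho> \<tau> - (deriv F \<tau>)\<^sup>2)
           (at \<tau> within {a..b})"
proof -
  have "concave_on {a<..<b} F"
    using conc by (rule concave_on_subset) auto
  \<comment> \<open>\<open>deriv F\<close> is a junk value off the differentiability points, but these miss only a countable set\<close>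
  define N where "N = {a, b} \<union> {s \<in> {a<..<b}. \<not> F differentiable (at s)}"
  have "negligible N"
    using concave_on_countable_nondifferentiable[OF \<open>concave_on {a<..<b} F\<close>]
    unfolding N_def by (intro countable_imp_negligible) simp
  have "(deriv F \<longlongrightarrow> deriv F \<tau>) (at \<tau> within {s \<in> {a<..<b}. F differentiable (at s)})"
    by (rule concave_on_deriv_tendsto) fact+
  then have "(deriv F \<longlongrightarrow> deriv F \<tau>) (at \<tau> within {a..b} - N)"
    by (rule tendsto_within_subset) (auto simp: N_def)
  moreover have "(\<rho> \<longlongrightarrow> \<rho> \<tau>) (at \<tau> within {a..b} - N)"
    by (rule tendsto_within_subset[OF \<open>isCont \<rho> \<tau>\<close>[unfolded isCont_def]]) simp
  ultimately have "((\<lambda>t. \<rho> t - (deriv F t)\<^sup>2) \<longlongrightarrow> \<rho> \<tau> - (deriv F \<tau>)\<^sup>2) (at \<tau> within {a..b} - N)"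
    by (intro tendsto_intros)
  then show ?thesis
    using integral_has_real_derivative_off_negligible[OF int \<open>negligible N\<close>] \<tau> by auto
qed

lemma gfun_has_real_derivative:
  fixes F \<rho> :: "real \<Rightarrow> real"
  assumes conc: "concave_on {t1..t2} F"
    and int: "set_integrable lebesgue {t1..t2} (\<lambda>\<tau>. \<rho> \<tau> - (deriv F \<tau>)\<^sup>2)"
    and \<tau>: "\<tau> \<in> {t1<..<t2}" "\<tau> \<noteq> 0" and "F differentiable (at \<tau>)" "isCont \<rho> \<tau>"
  shows "(gfun t1 F \<rho> b has_real_derivative
           \<rho> \<tau> - (deriv F \<tau>)\<^sup>2 + (2 * (F \<tau> / \<tau>) * deriv F \<tau> - (F \<tau> / \<tau>)\<^sup>2)) (at \<tau>)"
proof -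
  let ?\<phi> = "\<lambda>\<tau>. \<rho> \<tau> - (deriv F \<tau>)\<^sup>2" and ?Q = "2 * (F \<tau> / \<tau>) * deriv F \<tau> - (F \<tau> / \<tau>)\<^sup>2"
  have I: "((\<lambda>t. integral {t1..t} ?\<phi>) has_real_derivative ?\<phi> \<tau>) (at \<tau> within {t1..t2})"
    using integral_diff_deriv_square_has_real_derivative[OF conc
        set_lebesgue_integral_eq_integral(1)[OF int] \<tau>(1)] assms(5,6) by simp
  have "(F has_real_derivative deriv F \<tau>) (at \<tau>)"
    using \<open>F differentiable (at \<tau>)\<close> DERIV_deriv_iff_real_differentiable by blast
  from DERIV_divide[OF DERIV_power[OF this, of 2] DERIV_ident \<open>\<tau> \<noteq> 0\<close>]
  have "((\<lambda>t. (F t)\<^sup>2 / t) has_real_derivative ?Q) (at \<tau>)"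
    by (rule DERIV_cong) (use \<open>\<tau> \<noteq> 0\<close> in \<open>simp add: field_simps power2_eq_square\<close>)
  from DERIV_add[OF DERIV_add[OF DERIV_const I] has_field_derivative_at_within[OF this]]
  have "((\<lambda>t. b - (F t1)\<^sup>2 / t1 + integral {t1..t} ?\<phi> + (F t)\<^sup>2 / t) has_real_derivative ?\<phi> \<tau> + ?Q)
      (at \<tau> within {t1..t2})"
    by simp
  then have "(gfun t1 F \<rho> b has_real_derivative ?\<phi> \<tau> + ?Q) (at \<tau> within {t1..t2})"
    by (rule has_field_derivative_transform_within[OF _ zero_less_one])
      (use \<tau> gfun_eq_integral[OF int] in auto)
  moreover have "at \<tau> within {t1..t2} = at \<tau>"
    using \<tau> by (intro at_within_Icc_at) auto
  ultimately show ?thesis by simp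
qed

lemma gap_square_if_gfun_vanishes:
  fixes F \<rho> :: "real \<Rightarrow> real"
  assumes "0 < t1" and conc: "concave_on {t1..t2} F"
    and int: "set_integrable lebesgue {t1..t2} (\<lambda>\<tau>. \<rho> \<tau> - (deriv F \<tau>)\<^sup>2)"
    and sub: "t1 \<le> s1" "s2 \<le> t2" and g0: "\<And>t. t \<in> {s1..s2} \<Longrightarrow> gfun t1 F \<rho> b t = 0"
    and \<tau>: "\<tau> \<in> {s1<..<s2}" and "F differentiable (at \<tau>)" "isCont \<rho> \<tau>"
  shows "\<rho> \<tau> = (F \<tau> / \<tau> - deriv F \<tau>)\<^sup>2"
proof -
  let ?E = "\<rho> \<tau> - (deriv F \<tau>)\<^sup>2 + (2 * (F \<tau> / \<tau>) * deriv F \<tau> - (F \<tau> / \<tau>)\<^sup>2)"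
  have "\<tau> \<in> {t1<..<t2}" "\<tau> \<noteq> 0" using \<tau> sub \<open>0 < t1\<close> by auto
  from gfun_has_real_derivative[OF conc int this \<open>F differentiable (at \<tau>)\<close> \<open>isCont \<rho> \<tau>\<close>]
  have "(gfun t1 F \<rho> b has_real_derivative ?E) (at \<tau> within {s1..s2})"
    by (rule has_field_derivative_at_within)
  then have "((\<lambda>_. 0) has_real_derivative ?E) (at \<tau> within {s1..s2})"
    by (rule has_field_derivative_transform_within[OF _ zero_less_one]) (use \<tau> g0 in auto)
  moreover have "at \<tau> within {s1..s2} = at \<tau>"
    using \<tau> by (intro at_within_Icc_at) auto
  ultimately have "?E = 0"
    using DERIV_unique[OF _ DERIV_const] by simp
  then show ?thesis
    unfolding power2_diff by linarith
qed

lemma deriv_variation_le_quotient_variation: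
  fixes F \<rho> :: "real \<Rightarrow> real"
  assumes conc: "concave_on {t1..t2} F"
    and noninc: "\<And>s t. t1 \<le> s \<Longrightarrow> s \<le> t \<Longrightarrow> t \<le> t2 \<Longrightarrow> \<rho> t \<le> \<rho> s"
    and dbound: "\<And>t D. t \<in> {t1..t2} \<Longrightarrow> (F has_real_derivative D) (at t within {t1..t2})
                   \<Longrightarrow> D \<le> F t / t"
    and D: "D \<subseteq> {t1<..<t2}" "\<And>\<tau>. \<tau> \<in> D \<Longrightarrow> F differentiable (at \<tau>)"
    and gap: "\<And>\<tau>. \<tau> \<in> D \<Longrightarrow> \<rho> \<tau> = (F \<tau> / \<tau> - deriv F \<tau>)\<^sup>2"
    and "x \<in> D" "y \<in> D"
  shows "\<bar>deriv F x - deriv F y\<bar> \<le> \<bar>F x / x - F y / y\<bar>"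
proof -
  have Fd: "(F has_real_derivative deriv F \<tau>) (at \<tau>)" if "\<tau> \<in> D" for \<tau>
    using D(2)[OF that] DERIV_deriv_iff_real_differentiable by blast
  have gap_nonneg: "0 \<le> F \<tau> / \<tau> - deriv F \<tau>" if "\<tau> \<in> D" for \<tau>
    using dbound[OF _ has_field_derivative_at_within[OF Fd[OF that]]] D(1) that by auto
  have ordered: "\<bar>deriv F a - deriv F c\<bar> \<le> \<bar>F a / a - F c / c\<bar>" if "a \<in> D" "c \<in> D" "a \<le> c" for a c
  proof -
    have "concave_on {t1<..<t2} F"
      using conc by (rule concave_on_subset) auto
    then have "deriv F c \<le> deriv F a"
      using concave_on_deriv_antimono[OF _ _ _ \<open>a \<le> c\<close> Fd Fd] that D(1) by blast
    moreover have "(F c / c - deriv F c)\<^sup>2 \<le> (F a / a - deriv F a)\<^sup>2"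
      using noninc[of a c] gap that D(1) by fastforce
    then have "F c / c - deriv F c \<le> F a / a - deriv F a"
      using gap_nonneg[OF \<open>a \<in> D\<close>] by (rule power2_le_imp_le)
    ultimately show ?thesis by linarith
  qed
  show ?thesis
  proof (cases "x \<le> y")
    case True
    then show ?thesis by (rule ordered[OF \<open>x \<in> D\<close> \<open>y \<in> D\<close>])
  next
    case False
    then show ?thesis using ordered[OF \<open>y \<in> D\<close> \<open>x \<in> D\<close>] by (metis abs_minus_commute linear)
  qed
qed

theorem lemma12:
  fixes t1 x1 t2 x2 b s1 s2 :: real and F \<rho> :: "real \<Rightarrow> real"
  assumes "0 < t1" and "t1 < t2"
    and "x1 / t1 > x2 / t2"
    and "0 \<le> b" and "b \<le> (x2 - x1)\<^sup>2 / (t2 - t1) + x1\<^sup>2 / t1 - x2\<^sup>2 / t2"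
    and feas: "feasible t1 x1 t2 x2 b F \<rho>"
    and minim: "\<And>G \<sigma>. feasible t1 x1 t2 x2 b G \<sigma> \<Longrightarrow> I2 t1 t2 \<rho> \<le> I2 t1 t2 \<sigma>"
    and conc: "concave_on {t1..t2} F"
    and dbound: "\<And>t D. t \<in> {t1..t2} \<Longrightarrow> (F has_real_derivative D) (at t within {t1..t2})
                   \<Longrightarrow> D \<le> F t / t"
    and noninc: "\<And>s t. t1 \<le> s \<Longrightarrow> s \<le> t \<Longrightarrow> t \<le> t2 \<Longrightarrow> \<rho> t \<le> \<rho> s"
    and sub: "t1 \<le> s1" "s1 \<le> s2" "s2 \<le> t2"
    and gzero: "\<And>t. t \<in> {s1..s2} \<Longrightarrow> gfun t1 F \<rho> b t = 0"
  shows "(\<exists>h. abs_cont_on {s1..s2} h \<and>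
            (\<forall>t\<in>{s1..s2}. (F has_real_derivative h t) (at t within {s1..s2})))
       \<and> (\<exists>r. abs_cont_on {s1..s2} r \<and> (\<forall>t\<in>{s1<..<s2}. \<rho> t = r t))"
proof (cases "s1 = s2")
  case True
  then have "(F has_real_derivative 0) (at s1 within {s1..s2})"
    by (simp add: has_field_derivative_def has_derivative_within_singleton_iff bounded_linear_mult_right)
  with True show ?thesis
    by (intro conjI exI[of _ "\<lambda>_. 0"] abs_cont_on_const) auto
next
  case False
  with sub have "s1 < s2" by simp
  from feas have F_ac: "abs_cont_on {t1..t2} F"
    and int: "set_integrable lebesgue {t1..t2} (\<lambda>\<tau>. \<rho> \<tau> - (deriv F \<tau>)\<^sup>2)"
    unfolding feasible_def by auto
  have sub_Icc: "{s1..s2} \<subseteq> {t1..t2}" using sub by auto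
  have conc_s: "concave_on {s1..s2} F"
    using conc sub_Icc by (rule concave_on_subset) simp
  have anti: "antimono_on {s1<..<s2} \<rho>"
    by (rule monotone_onI) (use noninc sub in auto)
  define D where "D = {\<tau> \<in> {s1<..<s2}. F differentiable (at \<tau>) \<and> isCont \<rho> \<tau>}"
  have D: "D \<subseteq> {s1<..<s2}" "countable ({s1<..<s2} - D)"
    using countable_nondifferentiable_or_discontinuous[OF conc_s anti] by (auto simp: D_def)
  have D_diff: "F differentiable (at \<tau>)" and gap: "\<rho> \<tau> = (F \<tau> / \<tau> - deriv F \<tau>)\<^sup>2"
    if "\<tau> \<in> D" for \<tau>
    using gap_square_if_gfun_vanishes[OF \<open>0 < t1\<close> conc int sub(1,3) gzero] that by (auto simp: D_def)
  have "D \<subseteq> {t1<..<t2}"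
    by (rule order_trans[OF D(1)]) (use sub in auto)
  note dom = deriv_variation_le_quotient_variation[OF conc noninc dbound this D_diff gap]
  have q_ac: "abs_cont_on {s1..s2} (\<lambda>x. F x / x)"
    using abs_cont_on_divide_ident[OF abs_cont_on_subset[OF F_ac sub_Icc]] sub \<open>0 < t1\<close> by simp
  have F_cont: "continuous_on {s1..s2} F"
    by (rule abs_cont_on_imp_continuous_on[OF abs_cont_on_subset[OF F_ac sub_Icc]])
  obtain h where h_ac: "abs_cont_on {s1..s2} h" and hD: "\<And>x. x \<in> D \<Longrightarrow> h x = deriv F x"
    and h_deriv: "\<And>x. x \<in> {s1..s2} \<Longrightarrow> (F has_real_derivative h x) (at x within {s1..s2})"
    using concave_on_abs_cont_derivative_if_dominated[OF conc_s \<open>s1 < s2\<close> F_cont D D_diff q_ac dom]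
    by blast
  let ?r = "\<lambda>t. (F t / t - h t)\<^sup>2"
  have r_ac: "abs_cont_on {s1..s2} ?r"
    using abs_cont_on_mult[OF compact_Icc] abs_cont_on_diff[OF q_ac h_ac] by (simp add: power2_eq_square)
  have "\<rho> t = ?r t" if "t \<in> {s1<..<s2}" for t
    using antimono_eq_continuous_if_eq_on_cocountable[OF anti abs_cont_on_imp_continuous_on[OF r_ac] D _ that]
      gap hD by simp
  with h_ac h_deriv r_ac show ?thesis by blast
qed

end
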